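(* Let $G\simeq C_2^3$ and let $f$ be an automorphism of $\mathcal{P}_{0}(G)$ with trivial pullback. Then $f$ is the identity.
   Context: For an additively written finite abelian group $G$, $\mathcal{P}_{0}(G)$ is the monoid of all subsets of $G$ containing $0$, with setwise addition and identity $\{0\}$. An automorphism $f$ of $\mathcal{P}_0(G)$ has trivial pullback if $f(\{0,a\})=\{0,a\}$ for all $a\in G$. $C_2$ is the cyclic group of order $2$. *)

theory Defs
  imports Main "HOL-Library.Z2" "HOL-Library.Product_Plus"
begin

definition P0 :: "'a::ab_group_add set set" where
  "P0 = {A. 0 \<in> A}"

definition setadd :: "'a::ab_group_add set \<Rightarrow> 'a set \<Rightarrow> 'a set" where
  "setadd A B = {a + b | a b. a \<in> A \<and> b \<in> B}"

definition P0_aut :: "('a::ab_group_add set \<Rightarrow> 'a set) \<Rightarrow> bool" where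
  "P0_aut f \<longleftrightarrow> bij_betw f P0 P0
     \<and> (\<forall>A\<in>P0. \<forall>B\<in>P0. f (setadd A B) = setadd (f A) (f B))
     \<and> f {0} = {0}"

definition trivial_pullback :: "('a::ab_group_add set \<Rightarrow> 'a set) \<Rightarrow> bool" where
  "trivial_pullback f \<longleftrightarrow> (\<forall>a. f {0, a} = {0, a})"

definition iso_C2_cube :: "('a::ab_group_add \<Rightarrow> bit \<times> bit \<times> bit) \<Rightarrow> bool" where
  "iso_C2_cube \<phi> \<longleftrightarrow> bij \<phi> \<and> (\<forall>x y. \<phi> (x + y) = \<phi> x + \<phi> y)"

end

theory Submission imports Defs begin

(* In a group of exponent 2, A + {0, a} = A \<union> (A + a), and f(A + {0, a}) = f A + {0, a}.

   Three-element sets are fixed: f {0, a, b} lies in the subgroup {0, a, b, a + b}, and by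
   injectivity it is one of its 3-subsets containing 0.  For d outside that subgroup, {0, a, b}
   and {0, d, a + b + d} have the same sum with {0, a + d} and with {0, b + d}; comparing the
   images shows that a and b lie in f {0, a, b} together.

   Then f A = A by downward induction on A.  If every y \<notin> A is missed by some proper
   enlargement A + {0, a}, then A and f A are determined by these enlargements, which are
   fixed.  Otherwise the complement of A is a coset x + H with x \<notin> H, so in C_2^3 the set A
   is the complement of one or two points or a subgroup of order 4; each of these is a sum
   of sets with two or three elements. *)

lemma setadd_commute: "setadd A B = setadd B A"
  unfolding setadd_def by (metis (no_types, lifting) add.commute)

lemma subset_setadd: "0 \<in> B \<Longrightarrow> A \<subseteq> setadd A B"
  unfolding setadd_def by force

lemma setadd_UNIV: "0 \<in> B \<Longrightarrow> setadd UNIV B = UNIV"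
  by (metis setadd_commute subset_setadd top.extremum_uniqueI)

lemma setadd_empty: "setadd A {} = {}"
  unfolding setadd_def by simp

lemma setadd_insert: "setadd A (insert b B) = (\<lambda>x. x + b) ` A \<union> setadd A B"
  unfolding setadd_def by auto

lemma setadd_pair: "setadd A {0, a} = A \<union> (\<lambda>x. x + a) ` A"
  by (simp add: setadd_insert setadd_empty)

lemma mem_setadd_pair_iff: "z \<in> setadd A {0, a} \<longleftrightarrow> z \<in> A \<or> z - a \<in> A"
  unfolding setadd_pair by (auto intro: rev_image_eqI)

lemma eq_Compl_if_Un_eq_UNIV:
  fixes X S :: "'a set"
  assumes "finite (UNIV :: 'a set)" and "X \<union> S = UNIV"
    and "card X + card S \<le> card (UNIV :: 'a set)"
  shows "S = - X"
proof -
  have "finite X" "finite S" by (rule finite_subset[OF subset_UNIV assms(1)])+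
  then have "card (X \<inter> S) = 0" using card_Un_Int[of X S] assms(2,3) by simp
  then have "X \<inter> S = {}" using \<open>finite X\<close> by simp
  then show ?thesis using assms(2) by blast
qed

locale boolean_trivial_pullback_aut =
  fixes f :: "'a::ab_group_add set \<Rightarrow> 'a set"
  assumes add_self [simp]: "\<And>x::'a. x + x = 0"
    and aut: "P0_aut f"
    and pullback: "trivial_pullback f"
begin

lemma add_self_left [simp]: "x + (x + y) = (y::'a)"
  by (simp flip: add.assoc)

lemma minus_eq_self [simp]: "- x = (x::'a)"
  using add_eq_0_iff2[of x x] by simp

lemma add_eq_0_iff_eq [simp]: "x + y = 0 \<longleftrightarrow> x = (y::'a)"
  using add_eq_0_iff2[of x y] by simp

lemma mem_setadd_pair: "z \<in> setadd A {0, a} \<longleftrightarrow> z \<in> A \<or> z + a \<in> (A::'a set)"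
  using mem_setadd_pair_iff[of z A a] by (simp add: diff_conv_add_uminus)

lemma card_setadd_pair:
  fixes A :: "'a set"
  assumes "finite A" and closed: "\<And>u v. u \<in> A \<Longrightarrow> v \<in> A \<Longrightarrow> u + v \<in> A" and "a \<notin> A"
  shows "card (setadd A {0, a}) = 2 * card A"
proof -
  have "x + a \<notin> A" if "x \<in> A" for x
    using closed[OF that, of "x + a"] \<open>a \<notin> A\<close> by auto
  then have "A \<inter> (\<lambda>x. x + a) ` A = {}" by blast
  moreover have "card ((\<lambda>x. x + a) ` A) = card A" by (simp add: card_image)
  ultimately show ?thesis unfolding setadd_pair using \<open>finite A\<close> by (simp add: card_Un_disjoint)
qed

lemma f_setadd: "0 \<in> A \<Longrightarrow> 0 \<in> B \<Longrightarrow> f (setadd A B) = setadd (f A) (f B)"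
  using aut unfolding P0_aut_def P0_def by auto

lemma zero_mem_f: "0 \<in> A \<Longrightarrow> 0 \<in> f A"
  using aut unfolding P0_aut_def P0_def bij_betw_def by auto

lemma f_eq_f_iff: "0 \<in> A \<Longrightarrow> 0 \<in> B \<Longrightarrow> f A = f B \<longleftrightarrow> A = B"
  using aut unfolding P0_aut_def P0_def bij_betw_def inj_on_def by auto

lemma ex_f_eq: "0 \<in> B \<Longrightarrow> \<exists>A. 0 \<in> A \<and> f A = B"
  using aut unfolding P0_aut_def bij_betw_def P0_def by (metis imageE mem_Collect_eq)

lemma f_pair [simp]: "f {0, a} = {0, a}"
  using pullback unfolding trivial_pullback_def by auto

lemma f_setadd_pair: "0 \<in> A \<Longrightarrow> f (setadd A {0, a}) = setadd (f A) {0, a}"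
  by (simp add: f_setadd)

lemma f_UNIV: "f UNIV = UNIV"
proof -
  obtain A where A: "0 \<in> A" "f A = UNIV" using ex_f_eq by blast
  have "f UNIV = f (setadd UNIV A)" using A by (simp add: setadd_UNIV)
  also have "\<dots> = setadd UNIV (f UNIV)" using A by (simp add: f_setadd setadd_commute)
  also have "\<dots> = UNIV" by (simp add: setadd_UNIV zero_mem_f)
  finally show ?thesis .
qed

lemma f_span_eq: "f {0, a, b, a + b} = {0, a, b, a + b}"
proof -
  have "{0, a, b, a + b} = setadd {0, a} {0, b}" unfolding setadd_pair by (auto simp: add_ac)
  then show ?thesis by (simp add: f_setadd)
qed

lemma f_triple_subset_span: "f {0, a, b} \<subseteq> {0, a, b, a + b}"
proof -
  have "f {0, a, b} \<subseteq> setadd (f {0, a, b}) {0, a}" by (simp add: subset_setadd)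
  also have "\<dots> = f (setadd {0, a, b} {0, a})" by (simp add: f_setadd_pair)
  also have "setadd {0, a, b} {0, a} = {0, a, b, a + b}" unfolding setadd_pair by (auto simp: add_ac)
  finally show ?thesis by (simp add: f_span_eq)
qed

lemma mem_f_triple_iff:
  assumes "a \<noteq> 0" "b \<noteq> 0" and d: "d \<notin> {0, a, b, a + b}"
  shows "a \<in> f {0, a, b} \<longleftrightarrow> d \<in> f {0, d, a + b + d}"
proof -
  have "d \<notin> f {0, a, b}" using f_triple_subset_span d by blast
  have "d + (a + b + d) = a + b" by (simp add: add_ac)
  then have "f {0, d, a + b + d} \<subseteq> {0, d, a + b + d, a + b}"
    using f_triple_subset_span[of d "a + b + d"] by metis
  moreover have "a + b + d \<noteq> a" using d by (auto simp: add_ac)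
  ultimately have "a \<notin> f {0, d, a + b + d}" using assms by auto
  have "a \<in> f {0, a, b} \<longleftrightarrow> a \<in> setadd (f {0, a, b}) {0, a + d}"
    using \<open>d \<notin> f {0, a, b}\<close> by (simp add: mem_setadd_pair)
  also have "\<dots> \<longleftrightarrow> a \<in> f (setadd {0, a, b} {0, a + d})"
    by (simp add: f_setadd_pair)
  also have "setadd {0, a, b} {0, a + d} = setadd {0, d, a + b + d} {0, a + d}"
    unfolding setadd_pair by (auto simp: add_ac)
  also have "a \<in> f \<dots> \<longleftrightarrow> a \<in> setadd (f {0, d, a + b + d}) {0, a + d}"
    by (simp add: f_setadd_pair)
  also have "\<dots> \<longleftrightarrow> d \<in> f {0, d, a + b + d}"
    using \<open>a \<notin> f {0, d, a + b + d}\<close> by (simp add: mem_setadd_pair)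
  finally show ?thesis .
qed

lemma f_triple_eq_if_balanced:
  assumes "a \<noteq> 0" "b \<noteq> 0" "a \<noteq> b" and balanced: "a \<in> f {0, a, b} \<longleftrightarrow> b \<in> f {0, a, b}"
  shows "f {0, a, b} = {0, a, b}"
proof -
  define B where "B = f {0, a, b}"
  have "B = {0} \<or> B = {0, a + b} \<or> B = {0, a, b} \<or> B = {0, a, b, a + b}"
    using f_triple_subset_span zero_mem_f[of "{0, a, b}"] balanced unfolding B_def by blast
  moreover have ne: "B \<noteq> f X" if "0 \<in> X" "X \<noteq> {0, a, b}" for X
    using f_eq_f_iff[OF that(1), of "{0, a, b}"] that(2) unfolding B_def by simp
  have "a \<notin> {0}" "a \<notin> {0, a + b}" "a + b \<notin> {0, a, b}" using assms by auto
  then have "{0} \<noteq> {0, a, b}" "{0, a + b} \<noteq> {0, a, b}" "{0, a, b, a + b} \<noteq> {0, a, b}"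
    by blast+
  then have "B \<noteq> {0}" "B \<noteq> {0, a + b}" "B \<noteq> {0, a, b, a + b}"
    using ne[of "{0}"] ne[of "{0, a + b}"] ne[of "{0, a, b, a + b}"] f_pair[of 0] f_span_eq[of a b]
    by simp_all
  ultimately have "B = {0, a, b}" by argo
  then show ?thesis unfolding B_def .
qed

lemma f_triple_eq_if_outside:
  assumes d: "d \<notin> {0, a, b, a + b}"
  shows "f {0, a, b} = {0, a, b}"
proof (cases "a = 0 \<or> b = 0 \<or> a = b")
  case True
  then show ?thesis by (auto simp: insert_commute)
next
  case False
  then have "a \<in> f {0, a, b} \<longleftrightarrow> d \<in> f {0, d, a + b + d}"
    using d by (intro mem_f_triple_iff) auto
  moreover have "b \<in> f {0, b, a} \<longleftrightarrow> d \<in> f {0, d, b + a + d}"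
    using False d by (intro mem_f_triple_iff) (auto simp: add_ac)
  ultimately have "a \<in> f {0, a, b} \<longleftrightarrow> b \<in> f {0, a, b}"
    by (simp add: insert_commute add_ac)
  with False show ?thesis by (intro f_triple_eq_if_balanced) auto
qed

lemma f_eq_if_separated:
  assumes "0 \<in> A"
    and fixed: "\<And>a. setadd A {0, a} \<noteq> A \<Longrightarrow> f (setadd A {0, a}) = setadd A {0, a}"
    and separated: "\<And>y. y \<notin> A \<Longrightarrow> \<exists>a. setadd A {0, a} \<noteq> A \<and> y \<notin> setadd A {0, a}"
  shows "f A = A"
proof -
  have shift: "setadd (f A) {0, a} = setadd A {0, a}" if "setadd A {0, a} \<noteq> A" for a
    using fixed[OF that] f_setadd_pair[OF \<open>0 \<in> A\<close>] by simp
  have "f A \<subseteq> A"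
  proof
    fix y assume "y \<in> f A"
    show "y \<in> A"
    proof (rule ccontr)
      assume "y \<notin> A"
      then obtain a where "setadd A {0, a} \<noteq> A" "y \<notin> setadd A {0, a}"
        using separated by blast
      then show False using \<open>y \<in> f A\<close> shift subset_setadd[of "{0, a}" "f A"] by auto
    qed
  qed
  moreover have "A \<subseteq> f A"
  proof
    fix y assume "y \<in> A"
    show "y \<in> f A"
    proof (rule ccontr)
      assume "y \<notin> f A"
      have "y + a \<in> A" for a
      proof (cases "setadd A {0, a} = A")
        case True
        then show ?thesis using \<open>y \<in> A\<close> mem_setadd_pair[of "y + a" A a] by (simp add: add.assoc)
      next
        case False
        then have "y \<in> setadd (f A) {0, a}"
          using \<open>y \<in> A\<close> shift subset_setadd[of "{0, a}" A] by auto
        then show ?thesis using \<open>y \<notin> f A\<close> \<open>f A \<subseteq> A\<close> by (auto simp: mem_setadd_pair)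
      qed
      then have "A = UNIV" by (metis UNIV_eq_I add_self_left)
      then show False using \<open>y \<notin> f A\<close> f_UNIV by simp
    qed
  qed
  ultimately show ?thesis by blast
qed

lemma stable_if_unseparated:
  fixes A :: "'a set"
  assumes "x \<notin> A" and unseparated: "\<And>a. setadd A {0, a} \<noteq> A \<Longrightarrow> x \<in> setadd A {0, a}"
    and "y \<notin> A" and "w \<in> A"
  shows "w + (x + y) \<in> A"
proof -
  have "setadd A {0, x + y} = A"
  proof (rule ccontr)
    assume "setadd A {0, x + y} \<noteq> A"
    then have "x \<in> setadd A {0, x + y}" by (rule unseparated)
    then show False using \<open>x \<notin> A\<close> \<open>y \<notin> A\<close> by (simp add: mem_setadd_pair)
  qed
  moreover have "w + (x + y) \<in> setadd A {0, x + y}"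
    using \<open>w \<in> A\<close> by (simp add: mem_setadd_pair add.assoc)
  ultimately show ?thesis by simp
qed

end

locale C2_cube_trivial_pullback_aut =
  boolean_trivial_pullback_aut f for f :: "'a::ab_group_add set \<Rightarrow> 'a set" +
  assumes card_UNIV: "card (UNIV :: 'a set) = 8"
begin

lemma finite_group: "finite (UNIV :: 'a set)"
  by (rule card_ge_0_finite) (simp add: card_UNIV)

lemma ex_not_mem: "\<exists>u. u \<notin> {a, b, c, d :: 'a}"
proof -
  have "card {a, b, c, d} < card (UNIV :: 'a set)"
    using card_length[of "[a, b, c, d]"] card_UNIV by simp
  then have "{a, b, c, d} \<noteq> UNIV" by auto
  then show ?thesis by blast
qed

lemma UNIV_eq_span3:
  fixes x y z :: 'a
  assumes "x \<noteq> 0" "y \<notin> {0, x}" "z \<notin> {0, x, y, x + y}"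
  shows "UNIV = {0, x, y, x + y, z, x + z, y + z, x + y + z}"
proof -
  define K where "K = {0, x, y, x + y}"
  have "card (setadd {0, x} {0, y}) = 2 * card {0, x}"
    by (rule card_setadd_pair) (use assms(2) in auto)
  moreover have "setadd {0, x} {0, y} = K" unfolding K_def setadd_pair by auto
  ultimately have "card K = 4" using assms(1) by simp
  have "card (setadd K {0, z}) = 2 * card K"
    by (rule card_setadd_pair) (use assms(3) in \<open>auto simp: K_def add_ac\<close>)
  with \<open>card K = 4\<close> have "setadd K {0, z} = UNIV"
    using card_subset_eq[OF finite_group subset_UNIV] card_UNIV by simp
  moreover have "setadd K {0, z} = {0, x, y, x + y, z, x + z, y + z, x + y + z}"
    unfolding K_def setadd_pair by (auto simp: add_ac)
  ultimately show ?thesis by simp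
qed

lemma f_triple_eq: "f {0, a, b} = {0, a, b}"
  using ex_not_mem[of 0 a b "a + b"] f_triple_eq_if_outside by blast

lemma f_Compl_singleton:
  assumes "x \<noteq> 0"
  shows "f (- {x}) = - {x}"
proof -
  obtain y where y: "y \<notin> {0, x}" using ex_not_mem[of 0 x 0 x] by auto
  obtain u where u: "u \<notin> {0, x, y, x + y}" using ex_not_mem by blast
  define S where "S = setadd {0, y, u} {0, y + u, x + y + u}"
  have S: "S = {0, y, u, y + u, x + y, x + u, x + y + u}"
    unfolding S_def setadd_insert setadd_empty by (auto simp: add_ac)
  have "{x} \<union> S = UNIV"
    unfolding S UNIV_eq_span3[OF assms y u] by (auto simp: add_ac)
  moreover have "card {x} + card S \<le> card (UNIV :: 'a set)"
    using card_length[of "[0, y, u, y + u, x + y, x + u, x + y + u]"] card_UNIV unfolding S by simp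
  ultimately have "S = - {x}" by (rule eq_Compl_if_Un_eq_UNIV[OF finite_group])
  moreover have "f S = S" unfolding S_def by (simp add: f_setadd f_triple_eq)
  ultimately show ?thesis by simp
qed

lemma f_Compl_pair:
  assumes "x \<noteq> 0" and y: "y \<notin> {0, x}"
  shows "f (- {x, y}) = - {x, y}"
proof -
  obtain u where u: "u \<notin> {0, x, y, x + y}" using ex_not_mem by blast
  define S where "S = setadd {0, u, x + u} {0, x + y}"
  have S: "S = {0, u, x + u, x + y, x + y + u, y + u}"
    unfolding S_def setadd_pair by (auto simp: add_ac)
  have "{x, y} \<union> S = UNIV"
    unfolding S UNIV_eq_span3[OF assms u] by (auto simp: add_ac)
  moreover have "card {x, y} + card S \<le> card (UNIV :: 'a set)"
    using card_length[of "[x, y]"] card_length[of "[0, u, x + u, x + y, x + y + u, y + u]"] card_UNIV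
    unfolding S by simp
  ultimately have "S = - {x, y}" by (rule eq_Compl_if_Un_eq_UNIV[OF finite_group])
  moreover have "f S = S" unfolding S_def by (simp add: f_setadd f_triple_eq)
  ultimately show ?thesis by simp
qed

lemma eq_subgroup_if_stable:
  fixes A :: "'a set"
  assumes "0 \<in> A" "x \<notin> A" "y \<notin> A" "z \<notin> A" "y \<noteq> x" "z \<noteq> x" "z \<noteq> y"
    and stable: "\<And>y w. y \<notin> A \<Longrightarrow> w \<in> A \<Longrightarrow> w + (x + y) \<in> A"
  shows "A = setadd {0, x + y} {0, x + z}"
proof -
  have xy: "x + y \<in> A" using stable[of y 0] assms by simp
  have xz: "x + z \<in> A" using stable[of z 0] assms by simp
  have yz: "y + z \<in> A" using stable[OF \<open>z \<notin> A\<close> xy] by (simp add: add_ac)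
  have xyz: "x + y + z \<notin> A" using stable[OF \<open>y \<notin> A\<close>, of "x + y + z"] assms by (auto simp: add_ac)
  have span: "UNIV = {0, x, y, x + y, z, x + z, y + z, x + y + z}"
    by (rule UNIV_eq_span3) (use assms xy in auto)
  have "A \<subseteq> {0, x + y, x + z, y + z}"
  proof
    fix w assume "w \<in> A"
    moreover have "w \<in> {0, x, y, x + y, z, x + z, y + z, x + y + z}" using span by blast
    ultimately show "w \<in> {0, x + y, x + z, y + z}" using assms xyz by blast
  qed
  then have "A = {0, x + y, x + z, y + z}" using assms(1) xy xz yz by blast
  also have "\<dots> = setadd {0, x + y} {0, x + z}" unfolding setadd_pair by (auto simp: add_ac)
  finally show ?thesis .
qed

lemma f_eq_if_unseparated:
  assumes "0 \<in> A" "x \<notin> A"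
    and unseparated: "\<And>a. setadd A {0, a} \<noteq> A \<Longrightarrow> x \<in> setadd A {0, a}"
  shows "f A = A"
proof -
  have "x \<noteq> 0" using assms(1,2) by auto
  consider "A = - {x}"
    | y where "y \<notin> {0, x}" "A = - {x, y}"
    | y z where "y \<notin> A" "z \<notin> A" "y \<noteq> x" "z \<noteq> x" "z \<noteq> y"
  proof (cases "\<exists>y. y \<notin> A \<and> y \<noteq> x")
    case False
    then have "A = - {x}" using assms(2) by blast
    then show ?thesis by (rule that(1))
  next
    case True
    then obtain y where y: "y \<notin> A" "y \<noteq> x" by blast
    show ?thesis
    proof (cases "\<exists>z. z \<notin> A \<and> z \<noteq> x \<and> z \<noteq> y")
      case True
      then show ?thesis using y that(3) by blast
    next
      case False
      have "y \<notin> {0, x}" using y assms(1) by auto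
      moreover have "A = - {x, y}" using False assms(2) y by blast
      ultimately show ?thesis by (rule that(2))
    qed
  qed
  then show ?thesis
  proof cases
    case 1
    then show ?thesis using f_Compl_singleton[OF \<open>x \<noteq> 0\<close>] by simp
  next
    case (2 y)
    then show ?thesis using f_Compl_pair[OF \<open>x \<noteq> 0\<close>] by simp
  next
    case (3 y z)
    then have "A = setadd {0, x + y} {0, x + z}"
      using assms(1,2) stable_if_unseparated[OF assms(2) unseparated]
      by (intro eq_subgroup_if_stable) auto
    then show ?thesis by (simp add: f_setadd)
  qed
qed

theorem f_eq_self: "0 \<in> A \<Longrightarrow> f A = A"
proof (induction "card (- A)" arbitrary: A rule: less_induct)
  case less
  have fixed: "f B = B" if "A \<subset> B" for B
  proof -
    have "card (- B) < card (- A)"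
      using that finite_subset[OF subset_UNIV finite_group] by (intro psubset_card_mono) auto
    then show ?thesis using less that by blast
  qed
  show ?case
  proof (cases "\<forall>y. y \<notin> A \<longrightarrow> (\<exists>a. setadd A {0, a} \<noteq> A \<and> y \<notin> setadd A {0, a})")
    case True
    show ?thesis
    proof (rule f_eq_if_separated[OF less.prems])
      fix a assume "setadd A {0, a} \<noteq> A"
      then show "f (setadd A {0, a}) = setadd A {0, a}"
        using fixed subset_setadd[of "{0, a}" A] by blast
    qed (use True in blast)
  next
    case False
    then show ?thesis using f_eq_if_unseparated[OF less.prems] by blast
  qed
qed

end

lemma UNIV_bit: "(UNIV :: bit set) = {0, 1}"
  by auto

lemma add_self_bit_cube: "(p :: bit \<times> bit \<times> bit) + p = 0"
  by (cases p) (simp add: zero_prod_def)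

lemma card_bit_cube: "card (UNIV :: (bit \<times> bit \<times> bit) set) = 8"
  by (simp add: UNIV_Times_UNIV[symmetric] card_cartesian_product UNIV_bit del: UNIV_Times_UNIV)

theorem lemma3p5:
  fixes f :: "'a::ab_group_add set \<Rightarrow> 'a set"
    and \<phi> :: "'a \<Rightarrow> bit \<times> bit \<times> bit"
  assumes "iso_C2_cube \<phi>"
    and "P0_aut f"
    and "trivial_pullback f"
  shows "\<forall>A\<in>P0. f A = A"
proof -
  from assms(1) have "bij \<phi>" and hom: "\<And>x y. \<phi> (x + y) = \<phi> x + \<phi> y"
    unfolding iso_C2_cube_def by auto
  have "x + x = 0" for x :: 'a
  proof -
    have "\<phi> 0 = 0" using hom[of 0 0] by simp
    then have "\<phi> (x + x) = \<phi> 0" by (simp add: hom add_self_bit_cube)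
    then show ?thesis using bij_is_inj[OF \<open>bij \<phi>\<close>] by (simp add: inj_eq)
  qed
  moreover have "card (UNIV :: 'a set) = 8"
    using bij_betw_same_card[OF \<open>bij \<phi>\<close>] card_bit_cube by simp
  ultimately interpret C2_cube_trivial_pullback_aut f
    using assms(2,3) by unfold_locales
  show ?thesis using f_eq_self unfolding P0_def by blast
qed

end
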